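(* The sequence $\langle\{P_n\}_{n\in\mathbb{N}},\{p^m_k\}_{k<m}\rangle$, where $P_n=\{0,1,2,3\}^n$ with order $\le_n$ and $p^m_k$ is restriction to the first $k$ coordinates, is a Fraïssé sequence in the category of finite posets with quotient maps; i.e. (U) for every finite poset $X$ there are $n$ and a quotient map $P_n\to X$; and (A) for every $k\in\mathbb{N}$, every finite poset $Y$ and every quotient map $f:Y\to P_k$ there exist $\ell>k$ and a quotient map $g:P_\ell\to Y$ with $f\circ g=p^\ell_k$.
   Context: $x\le_n y$ iff $x=y$ or (i) there is $l<n$ with $x(k)=y(k)$ for $k<l$, $x(l)=2$, $y(l)=3$, and $x(k)=y(k)\in\{0,1\}$ for $l<k<n$; or (ii) $x(0)=0$, $y(0)=1$ and $x(k)=y(k)\in\{0,1\}$ for $1\le k<n$ (coordinates indexed $0,\dots,n-1$). A quotient map between posets is a surjective order-preserving map $\phi:A\to B$ such that for all $p\le r$ in $B$ there are $x\le y$ in $A$ with $\phi(x)=p$, $\phi(y)=r$. *)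

theory Defs
  imports Main
begin

definition Pset :: "nat \<Rightarrow> nat list set" where
  "Pset n = {x. length x = n \<and> (\<forall>k<n. x ! k \<in> {0,1,2,3})}"

definition leP :: "nat \<Rightarrow> nat list \<Rightarrow> nat list \<Rightarrow> bool" where
  "leP n x y \<longleftrightarrow> x = y
     \<or> (\<exists>l<n. (\<forall>k<l. x ! k = y ! k) \<and> x ! l = 2 \<and> y ! l = 3
            \<and> (\<forall>k. l < k \<and> k < n \<longrightarrow> x ! k = y ! k \<and> x ! k \<in> {0,1}))
     \<or> (0 < n \<and> x ! 0 = 0 \<and> y ! 0 = 1
            \<and> (\<forall>k. 1 \<le> k \<and> k < n \<longrightarrow> x ! k = y ! k \<and> x ! k \<in> {0,1}))"

definition proj :: "nat \<Rightarrow> nat list \<Rightarrow> nat list" where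
  "proj k x = take k x"

definition finite_poset :: "'a set \<Rightarrow> ('a \<Rightarrow> 'a \<Rightarrow> bool) \<Rightarrow> bool" where
  "finite_poset A le \<longleftrightarrow> finite A
     \<and> (\<forall>x\<in>A. le x x)
     \<and> (\<forall>x\<in>A. \<forall>y\<in>A. le x y \<and> le y x \<longrightarrow> x = y)
     \<and> (\<forall>x\<in>A. \<forall>y\<in>A. \<forall>z\<in>A. le x y \<and> le y z \<longrightarrow> le x z)"

definition quotient_map ::
  "'a set \<Rightarrow> ('a \<Rightarrow> 'a \<Rightarrow> bool) \<Rightarrow> 'b set \<Rightarrow> ('b \<Rightarrow> 'b \<Rightarrow> bool) \<Rightarrow> ('a \<Rightarrow> 'b) \<Rightarrow> bool" where
  "quotient_map A leA B leB \<phi> \<longleftrightarrow> \<phi> ` A = B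
     \<and> (\<forall>x\<in>A. \<forall>y\<in>A. leA x y \<longrightarrow> leB (\<phi> x) (\<phi> y))
     \<and> (\<forall>p\<in>B. \<forall>r\<in>B. leB p r \<longrightarrow> (\<exists>x\<in>A. \<exists>y\<in>A. leA x y \<and> \<phi> x = p \<and> \<phi> y = r))"

end

theory Submission
  imports Defs "HOL-Library.Countable_Set"
begin

text \<open>In \<open>P\<^sub>n\<close> every strict inequality is a cover \<open>u2v < u3v\<close> or \<open>0v < 1v\<close> with \<open>v\<close> a
0-1 word, and no element lies in two covers: the strict order is a matching.  A map out of such a
poset is therefore a quotient map as soon as it sends each cover to a comparable pair and every
comparable pair of the target is the image of some cover.  Given a quotient map \<open>f : Y \<rightarrow> P\<^sub>k\<close>, take
\<open>\<ell> = k + 1 + m\<close> with \<open>m \<ge> |Y \<times> Y|\<close>: a comparable pair \<open>a \<le> b\<close> of \<open>P\<^sub>k\<close> extends to a cover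
\<open>a2t < a3t\<close> (if \<open>a = b\<close>) or \<open>a0t < b0t\<close> (if \<open>a < b\<close>) of \<open>P\<^sub>\<ell>\<close> for every 0-1 tail \<open>t\<close> of
length \<open>m\<close>, and the number of ones in \<open>t\<close> indexes the comparable pairs of \<open>Y\<close> lying over
\<open>(a, b)\<close>.  Universality is the case \<open>k = 0\<close>, via the unique map onto \<open>P\<^sub>0\<close>.\<close>

definition lifts :: "'b set \<Rightarrow> ('b \<Rightarrow> 'b \<Rightarrow> bool) \<Rightarrow> ('b \<Rightarrow> 'c) \<Rightarrow> 'c \<Rightarrow> 'c \<Rightarrow> ('b \<times> 'b) set" where
  "lifts Y le f a b = {(p, r). p \<in> Y \<and> r \<in> Y \<and> le p r \<and> f p = a \<and> f r = b}"

lemma quotient_map_lifts_nonempty: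
  assumes "quotient_map Y le B leB f" "a \<in> B" "b \<in> B" "leB a b"
  shows "lifts Y le f a b \<noteq> {}"
  using assms unfolding quotient_map_def lifts_def by blast

lemma quotient_map_from_matching:
  fixes less :: "'a \<Rightarrow> 'a \<Rightarrow> bool" and h :: "'a \<Rightarrow> 'a \<Rightarrow> 'b \<times> 'b"
  assumes le_iff: "\<And>x y. x \<in> A \<Longrightarrow> y \<in> A \<Longrightarrow> leA x y \<longleftrightarrow> x = y \<or> less x y"
    and upper_unique: "\<And>x y y'. less x y \<Longrightarrow> less x y' \<Longrightarrow> y = y'"
    and lower_unique: "\<And>x x' y. less x y \<Longrightarrow> less x' y \<Longrightarrow> x = x'"
    and no_chain: "\<And>x y z. less x y \<Longrightarrow> \<not> less y z"
    and Y_refl: "\<And>p. p \<in> Y \<Longrightarrow> le p p"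
    and h_lifts: "\<And>x y. x \<in> A \<Longrightarrow> y \<in> A \<Longrightarrow> leA x y \<Longrightarrow> h x y \<in> lifts Y le f (\<pi> x) (\<pi> y)"
    and h_covers: "\<And>p r. p \<in> Y \<Longrightarrow> r \<in> Y \<Longrightarrow> le p r \<Longrightarrow> \<exists>x\<in>A. \<exists>y\<in>A. less x y \<and> h x y = (p, r)"
  shows "\<exists>g. quotient_map A leA Y le g \<and> (\<forall>x\<in>A. f (g x) = \<pi> x)"
proof -
  define g where "g x =
    (if \<exists>y\<in>A. less x y then fst (h x (THE y. y \<in> A \<and> less x y))
     else if \<exists>w\<in>A. less w x then snd (h (THE w. w \<in> A \<and> less w x) x)
     else fst (h x x))" for x
  have g_pair: "g x = fst (h x y) \<and> g y = snd (h x y)"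
    if "x \<in> A" "y \<in> A" "less x y" for x y
  proof
    have "(THE y'. y' \<in> A \<and> less x y') = y"
      using that upper_unique by blast
    then show "g x = fst (h x y)"
      unfolding g_def using that by auto
    have "(THE w. w \<in> A \<and> less w y) = x"
      using that lower_unique by blast
    then show "g y = snd (h x y)"
      unfolding g_def using that no_chain by auto
  qed
  have h_lifts': "h x y \<in> lifts Y le f (\<pi> x) (\<pi> y)" if "x \<in> A" "y \<in> A" "less x y" for x y
    using h_lifts le_iff that by blast
  have g_lifts: "g x \<in> Y \<and> f (g x) = \<pi> x" if "x \<in> A" for x
  proof (cases "\<exists>y\<in>A. less x y \<or> less y x")
    case True
    then obtain y where "y \<in> A" "less x y \<or> less y x" by blast
    then show ?thesis
      using g_pair h_lifts' \<open>x \<in> A\<close> unfolding lifts_def by fastforce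
  next
    case False
    then have "g x = fst (h x x)" unfolding g_def by auto
    then show ?thesis
      using h_lifts[of x x] le_iff \<open>x \<in> A\<close> unfolding lifts_def by auto
  qed
  have lift_pair: "\<exists>x\<in>A. \<exists>y\<in>A. leA x y \<and> g x = p \<and> g y = r"
    if pr: "p \<in> Y" "r \<in> Y" "le p r" for p r
  proof -
    obtain x y where "x \<in> A" "y \<in> A" "less x y" "h x y = (p, r)"
      using h_covers[OF pr] by blast
    then show ?thesis
      using g_pair le_iff by fastforce
  qed
  have "quotient_map A leA Y le g"
    unfolding quotient_map_def
  proof (intro conjI ballI impI)
    show "g ` A = Y"
      using g_lifts lift_pair Y_refl by blast
  next
    fix x y assume "x \<in> A" "y \<in> A" "leA x y"
    then consider "x = y" | "less x y" using le_iff by blast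
    then show "le (g x) (g y)"
    proof cases
      case 1 then show ?thesis using g_lifts Y_refl \<open>x \<in> A\<close> by simp
    next
      case 2 then show ?thesis
        using g_pair h_lifts' \<open>x \<in> A\<close> \<open>y \<in> A\<close> unfolding lifts_def by fastforce
    qed
  qed (rule lift_pair)
  then show ?thesis using g_lifts by blast
qed

lemma Pset_iff: "x \<in> Pset n \<longleftrightarrow> length x = n \<and> set x \<subseteq> {0,1,2,3}"
  unfolding Pset_def subset_eq all_set_conv_all_nth by auto

inductive lessP :: "nat list \<Rightarrow> nat list \<Rightarrow> bool" where
  cover_2_3: "set v \<subseteq> {0,1} \<Longrightarrow> lessP (u @ 2 # v) (u @ 3 # v)"
| cover_0_1: "set v \<subseteq> {0,1} \<Longrightarrow> lessP (0 # v) (1 # v)"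

lemma agree_except_at_iff_append:
  assumes "length x = n" "length y = n" "l < n"
  shows "(\<forall>k<l. x ! k = y ! k) \<and> x ! l = c \<and> y ! l = d
            \<and> (\<forall>k. l < k \<and> k < n \<longrightarrow> x ! k = y ! k \<and> x ! k \<in> S)
     \<longleftrightarrow> (\<exists>u v. length u = l \<and> set v \<subseteq> S \<and> x = u @ c # v \<and> y = u @ d # v)"
proof
  assume "(\<forall>k<l. x ! k = y ! k) \<and> x ! l = c \<and> y ! l = d
            \<and> (\<forall>k. l < k \<and> k < n \<longrightarrow> x ! k = y ! k \<and> x ! k \<in> S)"
  then have pre: "\<forall>k<l. x ! k = y ! k" and "x ! l = c" "y ! l = d"
    and post: "\<forall>k. l < k \<and> k < n \<longrightarrow> x ! k = y ! k \<and> x ! k \<in> S" by blast+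
  have take_eq: "take l x = take l y"
    using pre assms by (intro nth_equalityI) auto
  have drop_eq: "drop (Suc l) x = drop (Suc l) y"
    using post assms by (intro nth_equalityI) auto
  have "\<forall>k. l < k \<and> k < n \<longrightarrow> x ! k \<in> S"
    using post by blast
  then have drop_S: "set (drop (Suc l) x) \<subseteq> S"
    using assms by (auto simp: in_set_conv_nth)
  have "x = take l x @ c # drop (Suc l) x"
    using Cons_nth_drop_Suc[of l x] append_take_drop_id[of l x] assms \<open>x ! l = c\<close> by simp
  moreover have "y = take l x @ d # drop (Suc l) x"
    using Cons_nth_drop_Suc[of l y] append_take_drop_id[of l y] assms \<open>y ! l = d\<close>
    unfolding take_eq drop_eq by simp
  ultimately show "\<exists>u v. length u = l \<and> set v \<subseteq> S \<and> x = u @ c # v \<and> y = u @ d # v"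
    using assms drop_S by (intro exI[of _ "take l x"] exI[of _ "drop (Suc l) x"]) auto
next
  assume "\<exists>u v. length u = l \<and> set v \<subseteq> S \<and> x = u @ c # v \<and> y = u @ d # v"
  then obtain u v where "length u = l" "set v \<subseteq> S" "x = u @ c # v" "y = u @ d # v" by blast
  then show "(\<forall>k<l. x ! k = y ! k) \<and> x ! l = c \<and> y ! l = d
            \<and> (\<forall>k. l < k \<and> k < n \<longrightarrow> x ! k = y ! k \<and> x ! k \<in> S)"
    using assms by (auto simp: nth_append nth_Cons' subset_iff)
qed

lemma leP_iff_lessP:
  assumes "length x = n" "length y = n"
  shows "leP n x y \<longleftrightarrow> x = y \<or> lessP x y"
proof -
  have i_iff: "(\<exists>l<n. (\<forall>k<l. x ! k = y ! k) \<and> x ! l = 2 \<and> y ! l = 3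
            \<and> (\<forall>k. l < k \<and> k < n \<longrightarrow> x ! k = y ! k \<and> x ! k \<in> {0,1}))
      \<longleftrightarrow> (\<exists>u v. set v \<subseteq> {0,1} \<and> x = u @ 2 # v \<and> y = u @ 3 # v)"
  proof
    assume "\<exists>l<n. (\<forall>k<l. x ! k = y ! k) \<and> x ! l = 2 \<and> y ! l = 3
            \<and> (\<forall>k. l < k \<and> k < n \<longrightarrow> x ! k = y ! k \<and> x ! k \<in> {0,1})"
    then obtain l where "l < n" "(\<forall>k<l. x ! k = y ! k) \<and> x ! l = 2 \<and> y ! l = 3
            \<and> (\<forall>k. l < k \<and> k < n \<longrightarrow> x ! k = y ! k \<and> x ! k \<in> {0,1})" by blast
    then have "\<exists>u v. length u = l \<and> set v \<subseteq> {0,1} \<and> x = u @ 2 # v \<and> y = u @ 3 # v"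
      using agree_except_at_iff_append[OF assms \<open>l < n\<close>] by (simp only:)
    then show "\<exists>u v. set v \<subseteq> {0,1} \<and> x = u @ 2 # v \<and> y = u @ 3 # v" by blast
  next
    assume "\<exists>u v. set v \<subseteq> {0,1} \<and> x = u @ 2 # v \<and> y = u @ 3 # v"
    then obtain u v where uv: "set v \<subseteq> {0,1}" "x = u @ 2 # v" "y = u @ 3 # v" by blast
    have "length u < n" using assms uv by simp
    moreover have "\<exists>u' v'. length u' = length u \<and> set v' \<subseteq> {0,1} \<and> x = u' @ 2 # v' \<and> y = u' @ 3 # v'"
      using uv by blast
    ultimately show "\<exists>l<n. (\<forall>k<l. x ! k = y ! k) \<and> x ! l = 2 \<and> y ! l = 3
            \<and> (\<forall>k. l < k \<and> k < n \<longrightarrow> x ! k = y ! k \<and> x ! k \<in> {0,1})"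
      using agree_except_at_iff_append[OF assms] by blast
  qed
  have "(0 < n \<and> x ! 0 = 0 \<and> y ! 0 = 1
            \<and> (\<forall>k. 1 \<le> k \<and> k < n \<longrightarrow> x ! k = y ! k \<and> x ! k \<in> {0,1}))
      \<longleftrightarrow> (0 < n \<and> (\<exists>u v. length u = 0 \<and> set v \<subseteq> {0,1} \<and> x = u @ 0 # v \<and> y = u @ 1 # v))"
    using agree_except_at_iff_append[OF assms, of 0 0 1 "{0,1}"] by (auto simp: Suc_le_eq)
  also have "\<dots> \<longleftrightarrow> (\<exists>v. set v \<subseteq> {0,1} \<and> x = 0 # v \<and> y = 1 # v)"
    using assms by auto
  finally have ii_iff: "(0 < n \<and> x ! 0 = 0 \<and> y ! 0 = 1
            \<and> (\<forall>k. 1 \<le> k \<and> k < n \<longrightarrow> x ! k = y ! k \<and> x ! k \<in> {0,1}))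
      \<longleftrightarrow> (\<exists>v. set v \<subseteq> {0,1} \<and> x = 0 # v \<and> y = 1 # v)" .
  show ?thesis
    unfolding leP_def i_iff ii_iff lessP.simps by blast
qed

lemma append_Cons_eq_length_le:
  assumes "u @ c # v = u' @ c' # v'" "set v \<subseteq> {0,1}" "c' \<notin> {0,1}"
  shows "length u' \<le> length u"
proof (rule ccontr)
  assume "\<not> length u' \<le> length u"
  then have "v = drop (Suc (length u)) u' @ c' # v'"
    using arg_cong[OF assms(1), of "drop (Suc (length u))"] by simp
  then show False using assms(2,3) by auto
qed

lemma append_Cons_eq_last_big_iff:
  assumes "set v \<subseteq> {0,1}" "set v' \<subseteq> {0,1}" "c \<notin> {0,1}" "c' \<notin> {0,1}"
  shows "u @ c # v = u' @ c' # v' \<longleftrightarrow> u = u' \<and> c = c' \<and> v = v'"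
proof
  assume eq: "u @ c # v = u' @ c' # v'"
  then have "length u = length u'"
    using append_Cons_eq_length_le assms by (metis le_antisym)
  then show "u = u' \<and> c = c' \<and> v = v'" using eq by simp
qed simp

lemma Cons_small_neq_append_big: "set (d # v) \<subseteq> {0,1} \<Longrightarrow> c \<notin> {0,1} \<Longrightarrow> d # v \<noteq> u @ c # w"
  by (metis Un_iff list.set_intros(1) set_append subset_iff)

lemmas last_big_split_simps =
  append_Cons_eq_last_big_iff Cons_small_neq_append_big Cons_small_neq_append_big[THEN not_sym]

lemma lessP_upper_unique: "lessP x y \<Longrightarrow> lessP x y' \<Longrightarrow> y = y'"
  by (elim lessP.cases) (auto simp: last_big_split_simps)

lemma lessP_lower_unique: "lessP x y \<Longrightarrow> lessP x' y \<Longrightarrow> x = x'"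
  by (elim lessP.cases) (auto simp: last_big_split_simps)

lemma lessP_not_chain: "lessP x y \<Longrightarrow> \<not> lessP y z"
  by (auto elim!: lessP.cases simp: last_big_split_simps)

lemma lessP_take: "lessP x y \<Longrightarrow> take k x = take k y \<or> lessP (take k x) (take k y)"
proof (induction rule: lessP.induct)
  case (cover_2_3 v u)
  show ?case
  proof (cases "k \<le> length u")
    case False
    have "set (take (k - Suc (length u)) v) \<subseteq> {0,1}"
      by (rule order_trans[OF set_take_subset cover_2_3])
    then have "lessP (u @ 2 # take (k - Suc (length u)) v) (u @ 3 # take (k - Suc (length u)) v)"
      by (rule lessP.cover_2_3)
    then show ?thesis using False by (simp add: take_Cons')
  qed simp
next
  case (cover_0_1 v)
  show ?case
  proof (cases k)
    case (Suc j)
    have "set (take j v) \<subseteq> {0,1}" by (rule order_trans[OF set_take_subset cover_0_1])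
    then have "lessP (0 # take j v) (1 # take j v)" by (rule lessP.cover_0_1)
    then show ?thesis using Suc by simp
  qed simp
qed

lemma Pset_take: "x \<in> Pset n \<Longrightarrow> k \<le> n \<Longrightarrow> take k x \<in> Pset k"
  unfolding Pset_iff by (metis min.absorb2 length_take order_trans set_take_subset)

lemma leP_take:
  assumes "x \<in> Pset n" "y \<in> Pset n" "leP n x y" "k \<le> n"
  shows "leP k (take k x) (take k y)"
proof -
  have "x = y \<or> lessP x y"
    using assms(1-3) leP_iff_lessP[of x n y] by (simp add: Pset_iff)
  then have "take k x = take k y \<or> lessP (take k x) (take k y)"
    using lessP_take by blast
  moreover have "length (take k x) = k" "length (take k y) = k"
    using assms Pset_take by (simp_all add: Pset_iff)
  ultimately show ?thesis
    using leP_iff_lessP by blast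
qed

lemma lessP_append_tail:
  assumes "a = b \<or> lessP a b" "set t \<subseteq> {0,1}"
  obtains c d where "c \<in> {0,2}" "d \<in> {0,3}" "lessP (a @ c # t) (b @ d # t)"
proof (cases "a = b")
  case True
  then have "lessP (a @ 2 # t) (b @ 3 # t)" using assms(2) by (simp add: lessP.cover_2_3)
  then show thesis using that by blast
next
  case False
  then have "lessP a b" using assms(1) by blast
  then have "lessP (a @ 0 # t) (b @ 0 # t)"
  proof cases
    case (cover_2_3 v u)
    then show ?thesis using assms(2) lessP.cover_2_3[of "v @ 0 # t" u] by simp
  next
    case (cover_0_1 v)
    then show ?thesis using assms(2) lessP.cover_0_1[of "v @ 0 # t"] by simp
  qed
  then show thesis using that by blast
qed

lemma lessP_extension_with_index:
  assumes "a \<in> Pset k" "b \<in> Pset k" "leP k a b" "i \<le> m"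
  obtains x y where "x \<in> Pset (k + Suc m)" "y \<in> Pset (k + Suc m)" "lessP x y"
    "take k x = a" "take k y = b" "sum_list (drop (Suc k) x) = i"
proof -
  define t :: "nat list" where "t = replicate i 1 @ replicate (m - i) 0"
  have t: "set t \<subseteq> {0,1}" "length t = m" "sum_list t = i"
    using assms(4) by (auto simp: t_def sum_list_replicate)
  have "a = b \<or> lessP a b"
    using assms(1-3) leP_iff_lessP by (simp add: Pset_iff)
  then obtain c d where cd: "c \<in> {0,2}" "d \<in> {0,3}" "lessP (a @ c # t) (b @ d # t)"
    using lessP_append_tail t(1) by blast
  have "a @ c # t \<in> Pset (k + Suc m)" "b @ d # t \<in> Pset (k + Suc m)"
    using assms(1,2) cd(1,2) t by (auto simp: Pset_iff)
  moreover have "take k (a @ c # t) = a" "take k (b @ d # t) = b"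
    "sum_list (drop (Suc k) (a @ c # t)) = i"
    using assms(1,2) t by (simp_all add: Pset_iff)
  ultimately show thesis
    using that cd(3) by blast
qed

lemma Pset_factor_quotient_map:
  assumes Y: "finite_poset Y le" and f: "quotient_map Y le (Pset k) (leP k) f"
  shows "\<exists>l g. l > k \<and> quotient_map (Pset l) (leP l) Y le g \<and> (\<forall>x\<in>Pset l. f (g x) = proj k x)"
proof -
  define m where "m = card (Y \<times> Y)"
  define l where "l = k + Suc m"
  \<comment> \<open>an index beyond the enumeration of the (nonempty) set of lifts still yields a lift\<close>
  define h where "h x y = from_nat_into (lifts Y le f (take k x) (take k y)) (sum_list (drop (Suc k) x))"
    for x y :: "nat list"
  have finite_lifts: "finite (lifts Y le f a b)" for a b
    using Y finite_subset[of "lifts Y le f a b" "Y \<times> Y"] unfolding finite_poset_def lifts_def by auto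
  have "\<exists>g. quotient_map (Pset l) (leP l) Y le g \<and> (\<forall>x\<in>Pset l. f (g x) = take k x)"
  proof (rule quotient_map_from_matching[where less = lessP and h = h])
    show "leP l x y \<longleftrightarrow> x = y \<or> lessP x y" if "x \<in> Pset l" "y \<in> Pset l" for x y
      using that leP_iff_lessP by (simp add: Pset_iff)
  next
    show "h x y \<in> lifts Y le f (take k x) (take k y)"
      if "x \<in> Pset l" "y \<in> Pset l" "leP l x y" for x y
    proof -
      have "take k x \<in> Pset k" "take k y \<in> Pset k" "leP k (take k x) (take k y)"
        using that Pset_take leP_take by (simp_all add: l_def)
      then show ?thesis
        unfolding h_def by (intro from_nat_into quotient_map_lifts_nonempty[OF f])
    qed
  next
    fix p r assume pr: "p \<in> Y" "r \<in> Y" "le p r"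
    define S where "S = lifts Y le f (f p) (f r)"
    have "(p, r) \<in> S" using pr by (simp add: S_def lifts_def)
    then have "to_nat_on S (p, r) < card S"
      using to_nat_on_finite[OF finite_lifts] unfolding S_def bij_betw_def by auto
    also have "card S \<le> m"
      unfolding m_def S_def lifts_def using Y by (intro card_mono) (auto simp: finite_poset_def)
    finally have "to_nat_on S (p, r) \<le> m" by simp
    moreover have "f p \<in> Pset k" "f r \<in> Pset k" "leP k (f p) (f r)"
      using f pr unfolding quotient_map_def by auto
    ultimately obtain x y where "x \<in> Pset l" "y \<in> Pset l" "lessP x y"
      "take k x = f p" "take k y = f r" "sum_list (drop (Suc k) x) = to_nat_on S (p, r)"
      using lessP_extension_with_index unfolding l_def by metis
    moreover have "h x y = (p, r)"
      using calculation \<open>(p, r) \<in> S\<close> by (simp add: h_def S_def countable_finite finite_lifts)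
    ultimately show "\<exists>x\<in>Pset l. \<exists>y\<in>Pset l. lessP x y \<and> h x y = (p, r)"
      by blast
  qed (use Y lessP_upper_unique lessP_lower_unique lessP_not_chain in \<open>auto simp: finite_poset_def\<close>)
  moreover have "l > k" by (simp add: l_def)
  ultimately show ?thesis
    unfolding proj_def by blast
qed

lemma quotient_map_Pset_0:
  assumes "finite_poset X le" "X \<noteq> {}"
  shows "quotient_map X le (Pset 0) (leP 0) (\<lambda>_. [])"
proof -
  have P0: "Pset 0 = {[]}" by (auto simp: Pset_iff)
  obtain x0 where "x0 \<in> X" using assms(2) by blast
  moreover have "le x0 x0" using assms(1) \<open>x0 \<in> X\<close> by (simp add: finite_poset_def)
  ultimately show ?thesis
    unfolding quotient_map_def P0 by (auto simp: leP_def)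
qed

theorem mainTheorem3:
  shows "(\<forall>(X :: 'a set) leX. finite_poset X leX \<and> X \<noteq> {} \<longrightarrow>
            (\<exists>n \<phi>. quotient_map (Pset n) (leP n) X leX \<phi>))
       \<and> (\<forall>k (Y :: 'b set) leY f. finite_poset Y leY \<and> quotient_map Y leY (Pset k) (leP k) f \<longrightarrow>
            (\<exists>l g. l > k \<and> quotient_map (Pset l) (leP l) Y leY g
                   \<and> (\<forall>x\<in>Pset l. f (g x) = proj k x)))"
proof (intro conjI allI impI)
  fix X :: "'a set" and leX
  assume "finite_poset X leX \<and> X \<noteq> {}"
  then show "\<exists>n \<phi>. quotient_map (Pset n) (leP n) X leX \<phi>"
    using Pset_factor_quotient_map quotient_map_Pset_0 by blast
next
  fix k and Y :: "'b set" and leY f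
  assume "finite_poset Y leY \<and> quotient_map Y leY (Pset k) (leP k) f"
  then show "\<exists>l g. l > k \<and> quotient_map (Pset l) (leP l) Y leY g \<and> (\<forall>x\<in>Pset l. f (g x) = proj k x)"
    using Pset_factor_quotient_map by blast
qed

end
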